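(* Let $G=(V,E)$ be a finite simple graph, $C\subseteq V$ such that no vertex of $V\setminus C$ is isolated, and $m\ge 2$ an integer. Let $P_1$ be the convex hull of the integer feasible solutions of the integer program $F_1$ described below. Let $i\in\{2,\dots,m\}$, $k\in\{1,\dots,i\}$, $U\subseteq V$ nonempty with $|U|=p$, $N\subseteq N^p\langle U\rangle$ (possibly empty), and $W=\{w_1,\dots,w_t\}$ a nonempty set of $t$ vertices such that (H1) $W\subseteq N^p\langle U\rangle\setminus N$; (H2) $N\langle w_{r+1}\rangle\subseteq N\langle w_r\rangle$ for all $r=1,\dots,t-1$; (H3) $N\langle v\rangle\subseteq N\langle w_t\rangle$ for all $v\in N$. Let $j_1,\dots,j_{t+1}\in\{1,\dots,i\}$ be integers with $j_1=1$, $j_{t+1}=i$ and $j_r\le j_{r+1}$ for $r=1,\dots,t$. Then the inequality $$\sum_{u\in U}x_{ui}+\sum_{v\in N}y_{vi}+\sum_{r=1}^t\sum_{j=j_r}^{j_{r+1}}y_{w_rj}+\sum_{v\in N^p\langle U\rangle}(p-1)y_{vk}+\sum_{q=1}^{p-1}\sum_{v\in N^q\langle U\rangle}q\,y_{vk}\le p$$ is valid for $P_1$.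
   Context: $N\langle v\rangle = N[v]$ (closed neighborhood) if $v\in C$ and $N\langle v\rangle=N(v)$ (open neighborhood) if $v\notin C$. For nonempty $U\subseteq V$ and integer $r\ge 0$, $N^r\langle U\rangle=\{v\in V: |N\langle v\rangle\cap U|=r\}$. The integer program $F_1$ has binary variables $x_{vi},y_{vi}$ for $v\in V$, $i=1,\dots,m$, constants $x_{u0}=1$ for $u\in V$, objective $\max\sum_{i=1}^m\sum_{v\in V}y_{vi}$ and constraints: $\sum_{v\in V}y_{vi}\le 1$ ($i=1,\dots,m$); $\sum_{i=1}^m y_{vi}\le 1$ ($v\in V$); $x_{ui}\le x_{u(i-1)}$ ($u\in V$, $i=2,\dots,m$); $x_{ui}+\sum_{v\in N\langle u\rangle}y_{vi}\le 1$ ($u\in V$, $i=1,\dots,m$); $y_{vi}\le\sum_{u\in N\langle v\rangle}(x_{u(i-1)}-x_{ui})$ ($v\in V$, $i=2,\dots,m$); $x_{vi},y_{vi}\in\{0,1\}$. *)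

theory Defs
  imports Main "HOL-Analysis.Analysis"
begin

definition simple_graph :: "'a set \<Rightarrow> ('a \<Rightarrow> 'a \<Rightarrow> bool) \<Rightarrow> bool" where
  "simple_graph V E \<longleftrightarrow> finite V \<and> (\<forall>u v. E u v \<longrightarrow> u \<in> V \<and> v \<in> V)
     \<and> (\<forall>u v. E u v \<longrightarrow> E v u) \<and> (\<forall>v. \<not> E v v)"

definition nbh :: "('a \<Rightarrow> 'a \<Rightarrow> bool) \<Rightarrow> 'a set \<Rightarrow> 'a \<Rightarrow> 'a set" where
  "nbh E C v = (if v \<in> C then insert v {u. E v u} else {u. E v u})"

definition nbhr :: "'a set \<Rightarrow> ('a \<Rightarrow> 'a \<Rightarrow> bool) \<Rightarrow> 'a set \<Rightarrow> nat \<Rightarrow> 'a set \<Rightarrow> 'a set" where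
  "nbhr V E C r U = {v \<in> V. card (nbh E C v \<inter> U) = r}"

type_synonym 'a pt = "('a \<Rightarrow> nat \<Rightarrow> real) \<times> ('a \<Rightarrow> nat \<Rightarrow> real)"

text \<open>A point is a pair (x,y) of functions
  vertex \<Rightarrow> index \<Rightarrow> real; the variables are x v i, y v i for v in V and 1 \<le> i \<le> m.
  The constants x u 0 = 1 are stored in the point; all entries outside the variable
  range (and y v 0) are fixed to 0, so they carry no information.\<close>
definition F1_int :: "'a set \<Rightarrow> ('a \<Rightarrow> 'a \<Rightarrow> bool) \<Rightarrow> 'a set \<Rightarrow> nat \<Rightarrow> 'a pt set" where
  "F1_int V E C m = {(x, y).
     (\<forall>u\<in>V. x u 0 = 1) \<and>
     (\<forall>u i. (u \<notin> V \<or> i > m) \<longrightarrow> x u i = 0) \<and>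
     (\<forall>u i. (u \<notin> V \<or> i > m \<or> i = 0) \<longrightarrow> y u i = 0) \<and>
     (\<forall>v\<in>V. \<forall>i\<in>{1..m}. x v i \<in> {0, 1} \<and> y v i \<in> {0, 1}) \<and>
     (\<forall>i\<in>{1..m}. (\<Sum>v\<in>V. y v i) \<le> 1) \<and>
     (\<forall>v\<in>V. (\<Sum>i=1..m. y v i) \<le> 1) \<and>
     (\<forall>u\<in>V. \<forall>i\<in>{2..m}. x u i \<le> x u (i - 1)) \<and>
     (\<forall>u\<in>V. \<forall>i\<in>{1..m}. x u i + (\<Sum>v\<in>nbh E C u. y v i) \<le> 1) \<and>
     (\<forall>v\<in>V. \<forall>i\<in>{2..m}. y v i \<le> (\<Sum>u\<in>nbh E C v. x u (i - 1) - x u i))}"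

definition conv_pts :: "'a pt set \<Rightarrow> 'a pt set" where
  "conv_pts S = {(x, y). \<exists>n::nat. \<exists>c s.
     (\<forall>k<n. c k \<ge> (0::real) \<and> s k \<in> S) \<and> (\<Sum>k<n. c k) = 1 \<and>
     (\<forall>v i. x v i = (\<Sum>k<n. c k * fst (s k) v i)) \<and>
     (\<forall>v i. y v i = (\<Sum>k<n. c k * snd (s k) v i))}"

definition P1 :: "'a set \<Rightarrow> ('a \<Rightarrow> 'a \<Rightarrow> bool) \<Rightarrow> 'a set \<Rightarrow> nat \<Rightarrow> 'a pt set" where
  "P1 V E C m = conv_pts (F1_int V E C m)"

end

theory Submission
  imports Defs
begin

text \<open>
  An integer point of \<open>F\<^sub>1\<close> is a legal dominating sequence: \<open>y v i = 1\<close> means that \<open>v\<close> is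
  chosen at step \<open>i\<close>, and \<open>x u i = 1\<close> that \<open>u\<close> is still undominated after step \<open>i\<close>.
  At most one vertex is chosen per step, each vertex at most once, and every chosen vertex
  dominates a new vertex. Since the left-hand side is linear, it suffices to check such points.
  A vertex chosen no earlier than a vertex whose neighbourhood contains its own dominates
  nothing new, so by (H2), (H3) and the monotonicity of \<open>j\<close> at most one of the terms
  \<open>y v i\<close> with \<open>v \<in> N\<close> and \<open>y (w r) a\<close> with \<open>j r \<le> a \<le> j (r + 1)\<close> is \<open>1\<close>.
  Such a choice is made by a vertex of \<open>N\<^sup>p\<langle>U\<rangle>\<close> at a step \<open>\<le> i\<close>, so it dominates all of \<open>U\<close> and the \<open>x\<close>-terms vanish.
  If \<open>z\<close> is chosen at step \<open>k\<close> and \<open>c = |N\<langle>z\<rangle> \<inter> U|\<close>, the \<open>k\<close>-terms contribute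
  \<open>min c (p - 1)\<close>, while at most \<open>p - c\<close> vertices of \<open>U\<close> are undominated at step \<open>i \<ge> k\<close>.
\<close>

lemma sum_le_one_if_at_most_one_pos:
  fixes f :: "'b \<Rightarrow> real"
  assumes "finite A" and bounds: "\<And>a. a \<in> A \<Longrightarrow> 0 \<le> f a \<and> f a \<le> 1"
    and at_most_one: "\<And>a b. a \<in> A \<Longrightarrow> b \<in> A \<Longrightarrow> 0 < f a \<Longrightarrow> 0 < f b \<Longrightarrow> a = b"
  shows "sum f A \<le> 1"
proof (cases "\<exists>a\<in>A. 0 < f a")
  case True
  then obtain a where a: "a \<in> A" "0 < f a" by blast
  have "sum f A = sum f {a}"
    using assms a by (intro sum.mono_neutral_right) (auto simp: order_less_le)
  then show ?thesis using bounds a by simp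
next
  case False
  then have "sum f A \<le> 0" by (intro sum_nonpos) (simp add: not_less)
  then show ?thesis by simp
qed

lemma sum_01_pos_imp_one:
  fixes f :: "'b \<Rightarrow> real"
  assumes "\<And>a. a \<in> A \<Longrightarrow> f a = 0 \<or> f a = 1" "0 < sum f A"
  shows "\<exists>a\<in>A. f a = 1"
proof (rule ccontr)
  assume "\<not> ?thesis"
  then have "sum f A = 0" using assms(1) by (intro sum.neutral) blast
  with assms(2) show False by simp
qed

lemma mono_on_interval_Suc:
  fixes f :: "nat \<Rightarrow> 'b::order"
  assumes Suc_le: "\<And>n. lo \<le> n \<Longrightarrow> Suc n \<le> hi \<Longrightarrow> f n \<le> f (Suc n)"
    and "lo \<le> r" "r \<le> s" "s \<le> hi"
  shows "f r \<le> f s"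
  using \<open>r \<le> s\<close> \<open>s \<le> hi\<close>
proof (induction s rule: dec_induct)
  case (step n)
  then show ?case using Suc_le[of n] \<open>lo \<le> r\<close> by (auto intro: order_trans)
qed simp

lemma antimono_on_interval_Suc:
  fixes f :: "nat \<Rightarrow> 'b::order"
  assumes Suc_le: "\<And>n. lo \<le> n \<Longrightarrow> Suc n \<le> hi \<Longrightarrow> f (Suc n) \<le> f n"
    and "lo \<le> r" "r \<le> s" "s \<le> hi"
  shows "f s \<le> f r"
  using \<open>r \<le> s\<close> \<open>s \<le> hi\<close>
proof (induction s rule: dec_induct)
  case (step n)
  then show ?case using Suc_le[of n] \<open>lo \<le> r\<close> by (auto intro: order_trans)
qed simp

lemma sum_lincomb_swap:
  fixes c :: "nat \<Rightarrow> real"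
  shows "(\<Sum>a\<in>A. \<Sum>k<n. c k * f k a) = (\<Sum>k<n. c k * (\<Sum>a\<in>A. f k a))"
  by (subst sum.swap) (simp add: sum_distrib_left)

lemma sum_weighted_lincomb_swap:
  fixes c :: "nat \<Rightarrow> real"
  shows "(\<Sum>a\<in>A. g a * (\<Sum>k<n. c k * f k a)) = (\<Sum>k<n. c k * (\<Sum>a\<in>A. g a * f k a))"
  unfolding sum_distrib_left by (subst sum.swap) (simp add: mult.left_commute)

lemma conv_pts_le:
  fixes L :: "'a pt \<Rightarrow> real"
  assumes linear: "\<And>(n::nat) c s. L (\<lambda>v i. \<Sum>k<n. c k * fst (s k) v i, \<lambda>v i. \<Sum>k<n. c k * snd (s k) v i)
      = (\<Sum>k<n. c k * L (s k))"
    and valid: "\<And>z. z \<in> S \<Longrightarrow> L z \<le> b"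
    and "(x, y) \<in> conv_pts S"
  shows "L (x, y) \<le> b"
proof -
  obtain n :: nat and c s where comb: "\<forall>k<n. (0::real) \<le> c k \<and> s k \<in> S" "(\<Sum>k<n. c k) = 1"
      "\<forall>v i. x v i = (\<Sum>k<n. c k * fst (s k) v i)" "\<forall>v i. y v i = (\<Sum>k<n. c k * snd (s k) v i)"
    using \<open>(x, y) \<in> conv_pts S\<close> unfolding conv_pts_def mem_Collect_eq case_prod_conv by blast
  have "(x, y) = (\<lambda>v i. \<Sum>k<n. c k * fst (s k) v i, \<lambda>v i. \<Sum>k<n. c k * snd (s k) v i)"
    using comb(3,4) by (simp add: fun_eq_iff)
  then have "L (x, y) = (\<Sum>k<n. c k * L (s k))" using linear by simp
  also have "\<dots> \<le> (\<Sum>k<n. c k * b)"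
    using comb(1) valid by (intro sum_mono mult_left_mono) auto
  also have "\<dots> = b" using comb(2) by (simp add: sum_distrib_right[symmetric])
  finally show ?thesis .
qed

lemma nbhr_card_subset:
  assumes "finite U" "z \<in> nbhr V E C (card U) U"
  shows "U \<subseteq> nbh E C z"
proof -
  have "card (nbh E C z \<inter> U) = card U" using assms(2) unfolding nbhr_def by simp
  then have "nbh E C z \<inter> U = U" using card_subset_eq[OF assms(1)] by blast
  then show ?thesis by blast
qed

locale F1_int_point =
  fixes V :: "'a set" and E :: "'a \<Rightarrow> 'a \<Rightarrow> bool" and C :: "'a set" and m :: nat
    and x y :: "'a \<Rightarrow> nat \<Rightarrow> real"
  assumes graph: "simple_graph V E"
    and feasible: "(x, y) \<in> F1_int V E C m"
begin

lemma finite_V: "finite V"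
  using graph unfolding simple_graph_def by blast

lemma nbh_subset_V: "v \<in> V \<Longrightarrow> nbh E C v \<subseteq> V"
  using graph unfolding simple_graph_def nbh_def by auto

lemma finite_nbh: "v \<in> V \<Longrightarrow> finite (nbh E C v)"
  using nbh_subset_V finite_V finite_subset by blast

lemma nbh_sym: "u \<in> nbh E C v \<Longrightarrow> v \<in> nbh E C u"
  using graph unfolding simple_graph_def nbh_def by (auto split: if_splits)

lemma x_0: "u \<in> V \<Longrightarrow> x u 0 = 1"
  and x_outside: "u \<notin> V \<or> m < a \<Longrightarrow> x u a = 0"
  and y_outside: "v \<notin> V \<or> m < a \<or> a = 0 \<Longrightarrow> y v a = 0"
  and x_y_binary: "v \<in> V \<Longrightarrow> a \<in> {1..m} \<Longrightarrow> x v a \<in> {0, 1} \<and> y v a \<in> {0, 1}"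
  and sum_y_V_le_one: "a \<in> {1..m} \<Longrightarrow> (\<Sum>v\<in>V. y v a) \<le> 1"
  and sum_y_steps_le_one: "v \<in> V \<Longrightarrow> (\<Sum>a=1..m. y v a) \<le> 1"
  and x_Suc_le: "u \<in> V \<Longrightarrow> a \<in> {2..m} \<Longrightarrow> x u a \<le> x u (a - 1)"
  and x_plus_nbh_choices_le_one: "u \<in> V \<Longrightarrow> a \<in> {1..m} \<Longrightarrow> x u a + (\<Sum>v\<in>nbh E C u. y v a) \<le> 1"
  and y_le_newly_dominated: "v \<in> V \<Longrightarrow> a \<in> {2..m} \<Longrightarrow> y v a \<le> (\<Sum>u\<in>nbh E C v. x u (a - 1) - x u a)"
  using feasible unfolding F1_int_def by auto

lemma x_01: "x u a = 0 \<or> x u a = 1"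
  using x_0[of u] x_outside[of u a] x_y_binary[of u a] by (cases "a = 0"; cases "m < a") auto

lemma y_01: "y v a = 0 \<or> y v a = 1"
  using y_outside x_y_binary[of v a] by (cases "v \<in> V \<and> a \<in> {1..m}") auto

lemma x_nonneg: "0 \<le> x u a" and x_le_one: "x u a \<le> 1"
  using x_01[of u a] by auto

lemma y_nonneg: "0 \<le> y v a"
  using y_01[of v a] by auto

lemma chosen_in_range: "y v a = 1 \<Longrightarrow> v \<in> V \<and> 1 \<le> a \<and> a \<le> m"
  using y_outside[of v a] by (cases "v \<in> V \<and> 1 \<le> a \<and> a \<le> m") auto

lemma sum_y_step_le_one:
  assumes "finite S"
  shows "(\<Sum>v\<in>S. y v a) \<le> 1"
proof (cases "a \<in> {1..m}")
  case True
  have "(\<Sum>v\<in>S. y v a) \<le> (\<Sum>v\<in>S \<union> V. y v a)"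
    using assms finite_V y_nonneg by (intro sum_mono2) auto
  also have "\<dots> = (\<Sum>v\<in>V. y v a)"
    using assms finite_V y_outside by (intro sum.mono_neutral_right) auto
  finally show ?thesis using sum_y_V_le_one[OF True] by linarith
next
  case False
  then have "\<forall>v. y v a = 0" using y_outside by auto
  then show ?thesis by simp
qed

lemma sum_y_vertex_le_one:
  assumes "finite A"
  shows "(\<Sum>a\<in>A. y v a) \<le> 1"
proof (cases "v \<in> V")
  case True
  have "(\<Sum>a\<in>A. y v a) \<le> (\<Sum>a\<in>A \<union> {1..m}. y v a)"
    using assms y_nonneg by (intro sum_mono2) auto
  also have "\<dots> = (\<Sum>a=1..m. y v a)"
    using assms y_outside by (intro sum.mono_neutral_right) auto
  finally show ?thesis using sum_y_steps_le_one[OF True] by linarith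
next
  case False
  then show ?thesis using y_outside by (simp add: sum.neutral)
qed

lemma y_step_indicator:
  assumes "y z a = 1"
  shows "y v a = (if v = z then 1 else 0)"
proof (cases "v = z")
  case False
  have "y v a + y z a \<le> 1"
    using sum_y_step_le_one[of "{v, z}" a] False by simp
  then show ?thesis using False assms y_01[of v a] by auto
qed (use assms in simp)

lemma sum_weighted_y_chosen:
  assumes "y z a = 1" "finite S"
  shows "(\<Sum>v\<in>S. g v * y v a) = (if z \<in> S then g z else 0)"
  using assms by (simp add: y_step_indicator[OF assms(1)] if_distrib cong: if_cong)

lemma x_antimono:
  assumes "a \<le> b"
  shows "x u b \<le> x u a"
proof (cases "u \<in> V \<and> b \<le> m")
  case True
  have "x u (Suc n) \<le> x u n" if "Suc n \<le> m" for n
  proof (cases n)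
    case 0
    then show ?thesis using True x_0 x_le_one by simp
  next
    case (Suc n')
    then show ?thesis using True that x_Suc_le[of u "Suc n"] by simp
  qed
  then show ?thesis using antimono_on_interval_Suc[of 0 m "x u"] assms True by blast
next
  case False
  then show ?thesis using x_outside x_0 x_nonneg x_le_one by (metis le_trans not_le)
qed

lemma dominated_after_choice:
  assumes "y v a = 1" "u \<in> nbh E C v" "a \<le> b"
  shows "x u b = 0"
proof -
  have v: "v \<in> V" "a \<in> {1..m}" using chosen_in_range[OF assms(1)] by auto
  have "u \<in> V" "v \<in> nbh E C u" using nbh_subset_V[OF v(1)] assms(2) nbh_sym by auto
  then have "y v a \<le> (\<Sum>v'\<in>nbh E C u. y v' a)"
    using finite_nbh y_nonneg by (intro member_le_sum) auto
  then have "x u a \<le> 0" using x_plus_nbh_choices_le_one[OF \<open>u \<in> V\<close> v(2)] assms(1) by linarith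
  then show ?thesis using x_antimono[OF assms(3), of u] x_nonneg[of u b] by linarith
qed

lemma not_chosen_if_nbh_dominated:
  assumes "2 \<le> b" "\<And>u. u \<in> nbh E C v \<Longrightarrow> x u (b - 1) = 0"
  shows "y v b = 0"
proof (cases "v \<in> V \<and> b \<le> m")
  case True
  have "y v b \<le> (\<Sum>u\<in>nbh E C v. x u (b - 1) - x u b)"
    using True assms(1) y_le_newly_dominated by simp
  also have "\<dots> \<le> 0"
    using assms(2) x_nonneg by (intro sum_nonpos) (simp add: x_nonneg)
  finally show ?thesis using y_nonneg[of v b] by linarith
qed (use y_outside in auto)

lemma nested_choices_coincide:
  assumes "y v a = 1" "y v' b = 1" "a \<le> b" "nbh E C v' \<subseteq> nbh E C v"
  shows "v' = v \<and> b = a"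
proof (cases "a = b")
  case True
  then show ?thesis using assms y_step_indicator[of v a v'] by (auto split: if_splits)
next
  case False
  have "1 \<le> a" using chosen_in_range[OF assms(1)] by simp
  with False assms(3) have "2 \<le> b" "a \<le> b - 1" by auto
  then have "y v' b = 0"
    using assms(1,4) dominated_after_choice by (intro not_chosen_if_nbh_dominated) blast+
  then show ?thesis using assms(2) by simp
qed

lemma sum_x_dominated:
  assumes "y z a = 1" "U \<subseteq> nbh E C z" "a \<le> b"
  shows "(\<Sum>u\<in>U. x u b) = 0"
  using assms dominated_after_choice by (intro sum.neutral) blast

lemma window_sum_le_one:
  fixes w :: "nat \<Rightarrow> 'a" and j :: "nat \<Rightarrow> nat"
  assumes inj: "inj_on w {1..t}"
    and nested: "\<And>r s. 1 \<le> r \<Longrightarrow> r \<le> s \<Longrightarrow> s \<le> t \<Longrightarrow> nbh E C (w s) \<subseteq> nbh E C (w r)"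
    and j_mono: "\<And>r s. 1 \<le> r \<Longrightarrow> r \<le> s \<Longrightarrow> s \<le> t + 1 \<Longrightarrow> j r \<le> j s"
  shows "(\<Sum>r=1..t. \<Sum>a=j r..j (r + 1). y (w r) a) \<le> 1"
proof (rule sum_le_one_if_at_most_one_pos)
  fix r
  show "0 \<le> (\<Sum>a=j r..j (r + 1). y (w r) a) \<and> (\<Sum>a=j r..j (r + 1). y (w r) a) \<le> 1"
    by (simp add: sum_nonneg y_nonneg sum_y_vertex_le_one)
next
  have chosen: "\<exists>a\<in>{j r..j (r + 1)}. y (w r) a = 1"
    if "0 < (\<Sum>a=j r..j (r + 1). y (w r) a)" for r
    using that y_01 by (intro sum_01_pos_imp_one) auto
  have ordered: "r = s"
    if rs: "r \<in> {1..t}" "s \<in> {1..t}" "r \<le> s"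
      and pos: "0 < (\<Sum>a=j r..j (r + 1). y (w r) a)" "0 < (\<Sum>a=j s..j (s + 1). y (w s) a)" for r s
  proof (rule ccontr)
    assume "r \<noteq> s"
    obtain a where a: "a \<le> j (r + 1)" "y (w r) a = 1" using chosen[OF pos(1)] by auto
    obtain b where b: "j s \<le> b" "y (w s) b = 1" using chosen[OF pos(2)] by auto
    have "j (r + 1) \<le> j s" using \<open>r \<noteq> s\<close> rs by (intro j_mono) auto
    then have "w s = w r"
      using nested_choices_coincide[OF a(2) b(2)] a(1) b(1) nested rs by simp
    then show False using inj \<open>r \<noteq> s\<close> rs(1,2) by (simp add: inj_on_eq_iff)
  qed
  fix r s
  assume "r \<in> {1..t}" "s \<in> {1..t}"
    "0 < (\<Sum>a=j r..j (r + 1). y (w r) a)" "0 < (\<Sum>a=j s..j (s + 1). y (w s) a)"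
  then show "r = s" using ordered[of r s] ordered[of s r] by (metis nat_le_linear)
qed simp

lemma step_and_window_sum_le_one:
  fixes w :: "nat \<Rightarrow> 'a" and j :: "nat \<Rightarrow> nat"
  assumes "finite N" "w ` {1..t} \<inter> N = {}"
    and nested: "\<And>v r. v \<in> N \<Longrightarrow> r \<in> {1..t} \<Longrightarrow> nbh E C v \<subseteq> nbh E C (w r)"
    and window_before: "\<And>r. r \<in> {1..t} \<Longrightarrow> j (r + 1) \<le> i"
    and window: "(\<Sum>r=1..t. \<Sum>a=j r..j (r + 1). y (w r) a) \<le> 1"
  shows "(\<Sum>v\<in>N. y v i) + (\<Sum>r=1..t. \<Sum>a=j r..j (r + 1). y (w r) a) \<le> 1"
proof (cases "\<exists>v\<in>N. y v i = 1")
  case True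
  then obtain v where v: "v \<in> N" "y v i = 1" by blast
  have "y (w r) a = 0" if "r \<in> {1..t}" "a \<in> {j r..j (r + 1)}" for r a
  proof (rule ccontr)
    assume "y (w r) a \<noteq> 0"
    then have "y (w r) a = 1" using y_01 by blast
    then have "v = w r"
      using nested_choices_coincide[OF _ v(2)] nested[OF v(1) that(1)] window_before[OF that(1)] that(2)
      by auto
    then show False using assms(2) v(1) that(1) by blast
  qed
  then have "(\<Sum>r=1..t. \<Sum>a=j r..j (r + 1). y (w r) a) = 0" by simp
  then show ?thesis using sum_y_step_le_one[OF assms(1)] by simp
next
  case False
  then have "(\<Sum>v\<in>N. y v i) = 0" using y_01 by (intro sum.neutral) blast
  then show ?thesis using window by simp
qed

lemma sum_x_le_card_undominated:
  assumes "y z k = 1" "k \<le> i" "finite U"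
  shows "(\<Sum>u\<in>U. x u i) \<le> real (card U) - real (card (nbh E C z \<inter> U))"
proof -
  define K where "K = nbh E C z \<inter> U"
  have "(\<Sum>u\<in>U. x u i) = (\<Sum>u\<in>U - K. x u i) + (\<Sum>u\<in>K. x u i)"
    using assms(3) by (simp add: K_def sum.subset_diff[of K U])
  also have "(\<Sum>u\<in>K. x u i) = 0"
    using sum_x_dominated[OF assms(1) _ assms(2)] unfolding K_def by blast
  also have "(\<Sum>u\<in>U - K. x u i) \<le> real (card (U - K))"
    using sum_bounded_above[of "U - K" "\<lambda>u. x u i" 1] x_le_one by simp
  also have "card (U - K) = card U - card K"
    using assms(3) unfolding K_def by (simp add: card_Diff_subset)
  finally show ?thesis
    using card_mono[OF assms(3), of K] unfolding K_def by (simp add: of_nat_diff)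
qed

lemma k_terms_bound:
  assumes U: "U \<subseteq> V" "U \<noteq> {}" "card U = p" and "k \<le> i"
  defines "D \<equiv> (\<Sum>v\<in>nbhr V E C p U. (real p - 1) * y v k)
    + (\<Sum>q=1..p-1. \<Sum>v\<in>nbhr V E C q U. real q * y v k)"
  shows "(\<Sum>u\<in>U. x u i) + D \<le> real p" and "D \<le> real p - 1"
proof -
  have finU: "finite U" using U(1) finite_V finite_subset by blast
  with U have "1 \<le> p" by (metis card_gt_0_iff less_eq_Suc_le One_nat_def)
  have fin_nbhr: "finite (nbhr V E C q U)" for q
    using finite_V unfolding nbhr_def by simp
  have A_le: "(\<Sum>u\<in>U. x u i) \<le> real p"
    using sum_bounded_above[of U "\<lambda>u. x u i" 1] x_le_one U(3) by simp
  have "(\<Sum>u\<in>U. x u i) + D \<le> real p \<and> D \<le> real p - 1"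
  proof (cases "\<exists>z. y z k = 1")
    case True
    then obtain z where z: "y z k = 1" by blast
    then have "z \<in> V" using chosen_in_range by blast
    define c where "c = card (nbh E C z \<inter> U)"
    have z_nbhr: "z \<in> nbhr V E C q U \<longleftrightarrow> c = q" for q
      using \<open>z \<in> V\<close> unfolding nbhr_def c_def by simp
    have "c \<le> p" unfolding c_def using card_mono[OF finU Int_lower2] U(3) by simp
    have "(\<Sum>q=1..p-1. \<Sum>v\<in>nbhr V E C q U. real q * y v k) = (\<Sum>q=1..p-1. if c = q then real q else 0)"
      using z fin_nbhr z_nbhr by (simp add: sum_weighted_y_chosen)
    also have "\<dots> = (if c \<in> {1..p-1} then real c else 0)"
      by (simp add: sum.delta)
    finally have "D = (if c = p then real p - 1 else 0) + (if c \<in> {1..p-1} then real c else 0)"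
      unfolding D_def using z fin_nbhr z_nbhr by (simp add: sum_weighted_y_chosen)
    then have D_le: "D \<le> real c" "D \<le> real p - 1"
      using \<open>c \<le> p\<close> \<open>1 \<le> p\<close> by auto
    have "(\<Sum>u\<in>U. x u i) \<le> real p - real c"
      using sum_x_le_card_undominated[OF z \<open>k \<le> i\<close> finU] U(3) unfolding c_def by simp
    then show ?thesis using D_le by linarith
  next
    case False
    then have "y v k = 0" for v using y_01 by blast
    then have "D = 0" unfolding D_def by simp
    then show ?thesis using A_le \<open>1 \<le> p\<close> by simp
  qed
  then show "(\<Sum>u\<in>U. x u i) + D \<le> real p" and "D \<le> real p - 1" by auto
qed

lemma sum_x_zero_if_step_or_window_pos:
  fixes w :: "nat \<Rightarrow> 'a" and j :: "nat \<Rightarrow> nat"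
  assumes "finite U" "card U = p" "N \<subseteq> nbhr V E C p U" "w ` {1..t} \<subseteq> nbhr V E C p U"
    and window_before: "\<And>r. r \<in> {1..t} \<Longrightarrow> j (r + 1) \<le> i"
    and pos: "0 < (\<Sum>v\<in>N. y v i) + (\<Sum>r=1..t. \<Sum>a=j r..j (r + 1). y (w r) a)"
  shows "(\<Sum>u\<in>U. x u i) = 0"
proof -
  have "\<exists>z\<in>nbhr V E C p U. \<exists>a\<le>i. y z a = 1"
  proof (cases "0 < (\<Sum>v\<in>N. y v i)")
    case True
    then show ?thesis using assms(3) y_01 sum_01_pos_imp_one[of N "\<lambda>v. y v i"] by blast
  next
    case False
    then have "0 < (\<Sum>r=1..t. \<Sum>a=j r..j (r + 1). y (w r) a)" using pos by linarith
    then obtain r where r: "r \<in> {1..t}" "0 < (\<Sum>a=j r..j (r + 1). y (w r) a)"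
      by (meson not_less sum_nonpos)
    then obtain a where "a \<in> {j r..j (r + 1)}" "y (w r) a = 1"
      using y_01 sum_01_pos_imp_one[of "{j r..j (r + 1)}" "y (w r)"] by blast
    moreover have "w r \<in> nbhr V E C p U" using assms(4) r(1) by blast
    ultimately show ?thesis using window_before[OF r(1)] by (intro bexI[of _ "w r"] exI[of _ a]) auto
  qed
  then obtain z a where z: "z \<in> nbhr V E C p U" "a \<le> i" "y z a = 1" by blast
  then have "U \<subseteq> nbh E C z" using nbhr_card_subset[OF assms(1)] assms(2) by simp
  then show ?thesis using sum_x_dominated[OF z(3) _ z(2)] by blast
qed

lemma valid_at_integer_point:
  fixes w :: "nat \<Rightarrow> 'a" and j :: "nat \<Rightarrow> nat"
  assumes "k \<le> i"
    and U: "U \<subseteq> V" "U \<noteq> {}" "card U = p"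
    and N: "N \<subseteq> nbhr V E C p U"
    and inj: "inj_on w {1..t}"
    and H1: "w ` {1..t} \<subseteq> nbhr V E C p U - N"
    and H2: "\<forall>r\<in>{1..t-1}. nbh E C (w (r + 1)) \<subseteq> nbh E C (w r)"
    and H3: "\<forall>v\<in>N. nbh E C v \<subseteq> nbh E C (w t)"
    and j: "\<forall>r\<in>{1..t+1}. j r \<in> {1..i}" "\<forall>r\<in>{1..t}. j r \<le> j (r + 1)"
  shows "(\<Sum>u\<in>U. x u i) + (\<Sum>v\<in>N. y v i) + (\<Sum>r=1..t. \<Sum>a=j r..j (r + 1). y (w r) a)
    + (\<Sum>v\<in>nbhr V E C p U. (real p - 1) * y v k)
    + (\<Sum>q=1..p-1. \<Sum>v\<in>nbhr V E C q U. real q * y v k) \<le> real p"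
proof -
  have nested: "nbh E C (w s) \<subseteq> nbh E C (w r)" if "1 \<le> r" "r \<le> s" "s \<le> t" for r s
    using antimono_on_interval_Suc[of 1 t "\<lambda>r. nbh E C (w r)"] H2 that by simp
  have j_mono: "j r \<le> j s" if "1 \<le> r" "r \<le> s" "s \<le> t + 1" for r s
    using mono_on_interval_Suc[of 1 "t + 1" j] j(2) that by simp
  have N_nested: "nbh E C v \<subseteq> nbh E C (w r)" if "v \<in> N" "r \<in> {1..t}" for v r
    using H3 that nested[of r t] by auto
  have window_before: "j (r + 1) \<le> i" if "r \<in> {1..t}" for r
    using j(1) that by auto
  have "finite N" using N finite_subset[OF _ finite_V] unfolding nbhr_def by blast
  define S where "S = (\<Sum>v\<in>N. y v i) + (\<Sum>r=1..t. \<Sum>a=j r..j (r + 1). y (w r) a)"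
  have "S \<le> 1"
    unfolding S_def using \<open>finite N\<close> H1 N_nested window_before
    by (intro step_and_window_sum_le_one window_sum_le_one[OF inj nested j_mono]) auto
  have "0 \<le> S" unfolding S_def by (simp add: sum_nonneg y_nonneg)
  have "finite U" using U(1) finite_subset[OF _ finite_V] by blast
  have w_nbhr: "w ` {1..t} \<subseteq> nbhr V E C p U" using H1 by blast
  have U_dominated: "(\<Sum>u\<in>U. x u i) = 0" if "0 < S"
    using sum_x_zero_if_step_or_window_pos[where j = j, OF \<open>finite U\<close> U(3) N w_nbhr window_before] that
    unfolding S_def by blast
  show ?thesis
  proof (cases "0 < S")
    case True
    then show ?thesis
      using U_dominated k_terms_bound(2)[OF U \<open>k \<le> i\<close>] \<open>S \<le> 1\<close> unfolding S_def by linarith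
  next
    case False
    then show ?thesis
      using k_terms_bound(1)[OF U \<open>k \<le> i\<close>] \<open>0 \<le> S\<close> unfolding S_def by linarith
  qed
qed

end

theorem theorem2:
  fixes V C U N :: "'a set" and E :: "'a \<Rightarrow> 'a \<Rightarrow> bool"
    and m i k p t :: nat and w :: "nat \<Rightarrow> 'a" and j :: "nat \<Rightarrow> nat"
  assumes G: "simple_graph V E"
    and CV: "C \<subseteq> V"
    and noiso: "\<forall>v\<in>V - C. \<exists>u. E v u"
    and m2: "m \<ge> 2"
    and i: "i \<in> {2..m}"
    and k: "k \<in> {1..i}"
    and U: "U \<subseteq> V" "U \<noteq> {}" "card U = p"
    and N: "N \<subseteq> nbhr V E C p U"
    and t: "t \<ge> 1" "inj_on w {1..t}"
    and H1: "w ` {1..t} \<subseteq> nbhr V E C p U - N"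
    and H2: "\<forall>r\<in>{1..t-1}. nbh E C (w (r + 1)) \<subseteq> nbh E C (w r)"
    and H3: "\<forall>v\<in>N. nbh E C v \<subseteq> nbh E C (w t)"
    and j: "\<forall>r\<in>{1..t+1}. j r \<in> {1..i}" "j 1 = 1" "j (t + 1) = i"
           "\<forall>r\<in>{1..t}. j r \<le> j (r + 1)"
  shows "\<forall>(x, y)\<in>P1 V E C m.
    (\<Sum>u\<in>U. x u i) + (\<Sum>v\<in>N. y v i)
    + (\<Sum>r=1..t. \<Sum>jj=j r..j (r + 1). y (w r) jj)
    + (\<Sum>v\<in>nbhr V E C p U. (real p - 1) * y v k)
    + (\<Sum>q=1..p-1. \<Sum>v\<in>nbhr V E C q U. real q * y v k) \<le> real p"
proof -
  \<comment> \<open>\<open>C \<subseteq> V\<close>, the absence of isolated vertices, \<open>m \<ge> 2\<close>, \<open>t \<ge> 1\<close> and the endpoint values of \<open>j\<close>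
    are not needed.\<close>
  define L :: "'a pt \<Rightarrow> real" where "L = (\<lambda>(x, y).
    (\<Sum>u\<in>U. x u i) + (\<Sum>v\<in>N. y v i)
    + (\<Sum>r=1..t. \<Sum>jj=j r..j (r + 1). y (w r) jj)
    + (\<Sum>v\<in>nbhr V E C p U. (real p - 1) * y v k)
    + (\<Sum>q=1..p-1. \<Sum>v\<in>nbhr V E C q U. real q * y v k))"
  have valid: "L z \<le> real p" if "z \<in> F1_int V E C m" for z
  proof (cases z)
    case (Pair x y)
    interpret F1_int_point V E C m x y using G that Pair by unfold_locales auto
    show ?thesis
      unfolding L_def Pair using valid_at_integer_point[OF _ U N t(2) H1 H2 H3 j(1) j(4)] k by simp
  qed
  have linear: "L (\<lambda>v i. \<Sum>l<n. c l * fst (s l) v i, \<lambda>v i. \<Sum>l<n. c l * snd (s l) v i)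
      = (\<Sum>l<n. c l * L (s l))" for n :: nat and c s
    unfolding L_def
    by (simp add: case_prod_beta sum_lincomb_swap sum_weighted_lincomb_swap sum.distrib distrib_left)
  show ?thesis
    unfolding P1_def using conv_pts_le[of L, OF linear valid] by (auto simp: L_def)
qed

end
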